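(* For real $p\neq 0$, the inequality $\frac{2}{3}\left( \frac{\sinh x}{x}\right) ^{p}+\frac{1}{3}\left( \frac{\tanh x}{x}\right) ^{p}>1$ holds for all $x\in(0,\infty)$ if and only if $p>0$ or $p\leq -\frac{4}{5}$. *)

theory Defs
  imports Complex_Main
begin

end

theory Submission
  imports Defs "HOL-Analysis.Convex" "HOL-Real_Asymp.Real_Asymp"
begin

text \<open>
  With \<open>s = sinh x / x\<close> and \<open>c = cosh x\<close> the mean equals \<open>s\<^sup>p (2 + c\<^sup>-\<^sup>p) / 3\<close>.
  Two sharp bounds on \<open>s\<close> settle the positive directions: the Cusa-type bound
  \<open>c\<^bsup>1/3\<^esup> < s\<close> together with AM-GM \<open>2z + z\<^sup>-\<^sup>2 \<ge> 3\<close> handles \<open>p > 0\<close>, and the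
  power-mean bound \<open>s < ((2 + c\<^bsup>4/5\<^esup>)/3)\<^bsup>5/4\<^esup>\<close> together with the monotonicity
  of power means handles \<open>p \<le> -4/5\<close>. Both bounds follow from the sign of a
  derivative; for the second one this sign reduces to a polynomial inequality of degree 20
  in \<open>cosh\<^bsup>2/5\<^esup> x\<close>. For \<open>-4/5 < p < 0\<close> the expansion
  \<open>1 + p(4 + 5p) x\<^sup>4/180 + O(x\<^sup>6)\<close> of the mean at \<open>0\<close> shows that the inequality fails.
\<close>

definition sinh_tanh_mean :: "real \<Rightarrow> real \<Rightarrow> real" where
  "sinh_tanh_mean p x = 2/3 * (sinh x / x) powr p + 1/3 * (tanh x / x) powr p"

lemma three_mul_sq_le_two_mul_cube_plus_one:
  fixes z :: real
  assumes "0 \<le> z"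
  shows "3 * z\<^sup>2 \<le> 2 * z ^ 3 + 1"
proof -
  have "0 \<le> (z - 1)\<^sup>2 * (2 * z + 1)" using assms by simp
  thus ?thesis by (simp add: algebra_simps power2_eq_square power3_eq_cube)
qed

lemma three_mul_sq_lt_two_mul_cube_plus_one:
  fixes z :: real
  assumes "0 \<le> z" "z \<noteq> 1"
  shows "3 * z\<^sup>2 < 2 * z ^ 3 + 1"
proof -
  have "0 < (z - 1)\<^sup>2 * (2 * z + 1)" using assms by (simp add: add_pos_nonneg)
  thus ?thesis by (simp add: algebra_simps power2_eq_square power3_eq_cube)
qed

lemma power_mean_three_le:
  fixes a q :: real
  assumes "a > 0" "q \<ge> 1"
  shows "((2 + a) / 3) powr q \<le> (2 + a powr q) / 3"
proof -
  have "((1 - 1/3) *\<^sub>R 1 + (1/3) *\<^sub>R a) powr q \<le> (1 - 1/3) * 1 powr q + (1/3) * a powr q"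
    by (rule convex_onD[OF powr_convex[OF assms(2)]]) (use assms(1) in auto)
  thus ?thesis by (simp add: add_divide_distrib)
qed

lemma cube_mean_pow4_lt_square_mean_pow9:
  fixes q :: real
  assumes "q > 1"
  shows "((2 * q ^ 3 + 1) / 3) ^ 4 < q\<^sup>2 * ((2 + q\<^sup>2) / 3) ^ 9"
proof -
  define z where "z = q - 1"
  have "z > 0" using assms z_def by simp
  have "19683 * (q\<^sup>2 * ((2 + q\<^sup>2) / 3) ^ 9 - ((2 * q ^ 3 + 1) / 3) ^ 4) =
      z ^ 3 * (43740 + 295245*z + 991440*z^2 + 2157192*z^3 + 3368304*z^4 + 3975102*z^5
        + 3656528*z^6 + 2678704*z^7 + 1591928*z^8 + 781482*z^9 + 321792*z^10 + 111792*z^11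
        + 32496*z^12 + 7743*z^13 + 1464*z^14 + 208*z^15 + 20*z^16 + z^17)"
    unfolding z_def by (simp add: power_divide field_simps) algebra
  also have "\<dots> > 0"
    using \<open>z > 0\<close> by (intro mult_pos_pos add_pos_nonneg) auto
  finally show ?thesis by simp
qed

text \<open>With \<open>y = cosh\<^bsup>1/5\<^esup> t\<close> this is the negativity of the derivative of
  \<open>sinh t \<cdot> ((2 + cosh\<^bsup>4/5\<^esup> t)/3)\<^bsup>-5/4\<^esup> - t\<close>.\<close>

lemma sixth_power_ratio_lt_power_mean:
  fixes y :: real
  assumes "y > 1"
  shows "(2 * y ^ 6 + 1) / (3 * y) < ((2 + y ^ 4) / 3) powr (9/4)"
proof -
  define M where "M = (2 + y ^ 4) / 3"
  define K where "K = (2 * y ^ 6 + 1) / (3 * y)"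
  have "M > 0" unfolding M_def using assms by (simp add: add_pos_nonneg)
  have y2: "y\<^sup>2 > 1" using assms by (simp add: one_less_power)
  have "K ^ 4 = ((2 * (y\<^sup>2) ^ 3 + 1) / 3) ^ 4 / (y\<^sup>2)\<^sup>2"
    unfolding K_def by (simp add: power_divide power_mult_distrib flip: power_mult)
  also have "\<dots> < ((2 + (y\<^sup>2)\<^sup>2) / 3) ^ 9"
    using cube_mean_pow4_lt_square_mean_pow9[OF y2] y2 by (simp add: divide_less_eq mult.commute)
  also have "\<dots> = (M powr (9/4)) ^ 4"
    using \<open>M > 0\<close> unfolding M_def by (simp add: powr_power flip: power_mult)
  finally have "K ^ 4 < (M powr (9/4)) ^ 4" .
  hence "K < M powr (9/4)" by (rule power_less_imp_less_base) simp
  thus ?thesis unfolding K_def M_def .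
qed

lemma DERIV_sinh_mul_cosh_powr:
  fixes a t :: real
  shows "((\<lambda>t. sinh t * cosh t powr a) has_real_derivative
          cosh t powr (a - 1) * ((1 + a) * (cosh t)\<^sup>2 - a)) (at t)"
proof -
  have "cosh t * cosh t powr a + a * cosh t powr (a - 1) * sinh t * sinh t
      = cosh t powr (a - 1) * ((1 + a) * (cosh t)\<^sup>2 - a)"
  proof -
    have "cosh t powr a = cosh t powr (a - 1) * cosh t"
      using cosh_real_pos[of t] powr_add[of "cosh t" "a - 1" 1] by simp
    moreover have "(cosh t)\<^sup>2 = 1 + (sinh t)\<^sup>2" using cosh_square_eq[of t] by simp
    ultimately show ?thesis
      by (simp add: algebra_simps power2_eq_square) (metis mult.assoc distrib_right mult_1_left)
  qed
  thus ?thesis by (auto intro!: derivative_eq_intros)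
qed

lemma x_mul_cosh_powr_third_lt_sinh:
  fixes x :: real
  assumes "x > 0"
  shows "x * cosh x powr (1/3) < sinh x"
proof -
  define H where "H t = sinh t * cosh t powr (-1/3) - t" for t :: real
  have "H 0 < H x"
  proof (rule DERIV_pos_imp_increasing_open[OF assms])
    fix t :: real
    assume "0 < t"
    define z where "z = cosh t powr (2/3)"
    have "cosh t > 1" using cosh_real_strict_mono[of 0 t] \<open>0 < t\<close> by simp
    hence "z > 1" unfolding z_def by simp
    have "z ^ 3 = (cosh t)\<^sup>2" unfolding z_def by (simp add: powr_power)
    have "z\<^sup>2 = cosh t powr (4/3)" unfolding z_def by (simp add: powr_power)
    hence cosh_powr: "cosh t powr (-1/3 - 1) = 1 / z\<^sup>2" by (simp add: powr_minus_divide)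
    have "(H has_real_derivative
           cosh t powr (-1/3 - 1) * ((1 + -1/3) * (cosh t)\<^sup>2 - -1/3) - 1) (at t)"
      unfolding H_def by (rule DERIV_diff[OF DERIV_sinh_mul_cosh_powr DERIV_ident])
    moreover have "cosh t powr (-1/3 - 1) * ((1 + -1/3) * (cosh t)\<^sup>2 - -1/3) - 1 > 0"
      using three_mul_sq_lt_two_mul_cube_plus_one[of z] \<open>z > 1\<close>
      unfolding cosh_powr \<open>z ^ 3 = (cosh t)\<^sup>2\<close>[symmetric]
      by (simp add: field_simps)
    ultimately show "\<exists>y. (H has_real_derivative y) (at t) \<and> y > 0" by blast
  next
    show "continuous_on {0..x} H" unfolding H_def by (intro continuous_intros) simp
  qed
  hence "x < sinh x / cosh x powr (1/3)" by (simp add: H_def powr_minus_divide)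
  thus ?thesis by (simp add: less_divide_eq)
qed

lemma DERIV_sinh_mul_power_mean_powr:
  fixes t :: real
  shows "((\<lambda>t. sinh t * ((2 + cosh t powr (4/5)) / 3) powr (-5/4)) has_real_derivative
          ((2 + cosh t powr (4/5)) / 3) powr (-9/4) *
          (cosh t * ((2 + cosh t powr (4/5)) / 3) - (sinh t)\<^sup>2 / (3 * cosh t powr (1/5)))) (at t)"
proof -
  define m where "m = (2 + cosh t powr (4/5)) / 3"
  have "m > 0" unfolding m_def by (simp add: add_pos_nonneg)
  hence "m powr (-5/4) = m powr (-9/4) * m"
    using powr_add[of m "-9/4" 1] by simp
  moreover have "cosh t powr (4/5 - 1) = 1 / cosh t powr (1/5)"
    by (simp add: powr_minus_divide)
  ultimately show ?thesis unfolding m_def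
    by (auto intro!: derivative_eq_intros simp: add_pos_nonneg)
      (simp add: field_simps power2_eq_square, algebra)
qed

lemma sinh_lt_x_mul_power_mean:
  fixes x :: real
  assumes "x > 0"
  shows "sinh x < x * ((2 + cosh x powr (4/5)) / 3) powr (5/4)"
proof -
  define M where "M t = (2 + cosh t powr (4/5)) / 3" for t :: real
  have M_pos: "M t > 0" for t unfolding M_def by (simp add: add_pos_nonneg)
  define H where "H t = sinh t * M t powr (-5/4) - t" for t :: real
  have "H x < H 0"
  proof (rule DERIV_neg_imp_decreasing_open[OF assms])
    fix t :: real
    assume "0 < t"
    define y where "y = cosh t powr (1/5)"
    have "cosh t > 1" using cosh_real_strict_mono[of 0 t] \<open>0 < t\<close> by simp
    hence "y > 1" unfolding y_def by simp
    have "y ^ 5 = cosh t" "y ^ 4 = cosh t powr (4/5)"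
      unfolding y_def by (simp_all add: powr_power)
    hence "M t = (2 + y ^ 4) / 3" "(sinh t)\<^sup>2 = (y ^ 5)\<^sup>2 - 1"
      unfolding M_def using cosh_square_eq[of t] by simp_all
    hence "cosh t * M t - (sinh t)\<^sup>2 / (3 * cosh t powr (1/5)) = (2 * y ^ 6 + 1) / (3 * y)"
      using \<open>y > 1\<close> unfolding y_def[symmetric] unfolding \<open>y ^ 5 = cosh t\<close>[symmetric]
      by (simp add: field_simps) algebra
    also have "\<dots> < M t powr (9/4)"
      unfolding \<open>M t = (2 + y ^ 4) / 3\<close> by (rule sixth_power_ratio_lt_power_mean[OF \<open>y > 1\<close>])
    finally have "M t powr (-9/4) * (cosh t * M t - (sinh t)\<^sup>2 / (3 * cosh t powr (1/5))) - 1 < 0"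
      using M_pos[of t] by (simp add: powr_minus_divide divide_less_eq)
    moreover have "(H has_real_derivative
        M t powr (-9/4) * (cosh t * M t - (sinh t)\<^sup>2 / (3 * cosh t powr (1/5))) - 1) (at t)"
      unfolding H_def M_def
      by (rule DERIV_diff[OF DERIV_sinh_mul_power_mean_powr DERIV_ident])
    ultimately show "\<exists>y. (H has_real_derivative y) (at t) \<and> y < 0" by blast
  next
    have "continuous_on {0..x} M" unfolding M_def by (intro continuous_intros) auto
    thus "continuous_on {0..x} H"
      unfolding H_def using M_pos[THEN less_imp_neq, THEN not_sym] by (intro continuous_intros) auto
  qed
  hence "sinh x / M x powr (5/4) < x" by (simp add: H_def powr_minus_divide)
  thus ?thesis using M_pos[of x] by (simp add: M_def divide_less_eq)
qed

lemma sinh_tanh_mean_eq: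
  fixes p x :: real
  shows "sinh_tanh_mean p x = (sinh x / x) powr p * (2 + cosh x powr (-p)) / 3"
proof -
  have "tanh x / x = (sinh x / x) / cosh x" by (simp add: tanh_def)
  hence "(tanh x / x) powr p = (sinh x / x) powr p / cosh x powr p"
    by (simp only: powr_divide)
  also have "\<dots> = (sinh x / x) powr p * cosh x powr (-p)"
    by (simp add: powr_minus_divide)
  finally show ?thesis by (simp add: sinh_tanh_mean_def field_simps)
qed

lemma sinh_tanh_mean_gt_1_of_pos:
  fixes p x :: real
  assumes "x > 0" "p > 0"
  shows "sinh_tanh_mean p x > 1"
proof -
  define s where "s = sinh x / x"
  define z where "z = cosh x powr (p/3)"
  have "cosh x \<ge> 1" by (rule cosh_real_ge_1)
  hence "z \<ge> 1" unfolding z_def using assms(2) by (simp add: ge_one_powr_ge_zero)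
  have "cosh x powr (1/3) < s"
    using x_mul_cosh_powr_third_lt_sinh[OF assms(1)] assms(1)
    unfolding s_def by (simp add: less_divide_eq mult.commute)
  hence "(cosh x powr (1/3)) powr p < s powr p"
    by (intro powr_less_mono2[OF assms(2)]) simp_all
  hence "z < s powr p" unfolding z_def by (simp add: powr_powr)
  have "cosh x powr (-p) = 1 / z ^ 3"
    unfolding z_def by (simp add: powr_power powr_minus_divide)
  have "z * (2 + 1 / z ^ 3) / 3 = (2 * z ^ 3 + 1) / (3 * z\<^sup>2)"
    using \<open>z \<ge> 1\<close> by (simp add: field_simps power2_eq_square power3_eq_cube)
  hence "1 \<le> z * (2 + 1 / z ^ 3) / 3"
    using three_mul_sq_le_two_mul_cube_plus_one[of z] \<open>z \<ge> 1\<close> by (simp add: le_divide_eq)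
  also have "\<dots> < s powr p * (2 + 1 / z ^ 3) / 3"
    using \<open>z < s powr p\<close> \<open>z \<ge> 1\<close> by (simp add: add_pos_nonneg divide_strict_right_mono)
  finally show ?thesis
    unfolding sinh_tanh_mean_eq \<open>cosh x powr (-p) = 1 / z ^ 3\<close> s_def[symmetric] .
qed

lemma sinh_tanh_mean_gt_1_of_le:
  fixes p x :: real
  assumes "x > 0" "p \<le> -4/5"
  shows "sinh_tanh_mean p x > 1"
proof -
  define s where "s = sinh x / x"
  define r where "r = -p"
  have "s > 0" unfolding s_def using assms(1) by (simp add: sinh_real_pos_iff)
  have "r > 0" unfolding r_def using assms(2) by simp
  have "s < ((2 + cosh x powr (4/5)) / 3) powr (5/4)"
    using sinh_lt_x_mul_power_mean[OF assms(1)] assms(1)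
    unfolding s_def by (simp add: divide_less_eq mult.commute)
  hence "s powr r < (((2 + cosh x powr (4/5)) / 3) powr (5/4)) powr r"
    using \<open>s > 0\<close> by (intro powr_less_mono2[OF \<open>r > 0\<close>]) simp_all
  also have "\<dots> = ((2 + cosh x powr (4/5)) / 3) powr (5/4 * r)"
    by (simp add: powr_powr)
  also have "\<dots> \<le> (2 + (cosh x powr (4/5)) powr (5/4 * r)) / 3"
    using assms(2) by (intro power_mean_three_le) (simp_all add: r_def)
  also have "\<dots> = (2 + cosh x powr (-p)) / 3"
    by (simp add: powr_powr r_def)
  finally have "1 < (2 + cosh x powr (-p)) / 3 / s powr r"
    using \<open>s > 0\<close> by (simp add: less_divide_eq)
  moreover have "s powr p = 1 / s powr r" unfolding r_def by (simp add: powr_minus_divide)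
  ultimately show ?thesis unfolding sinh_tanh_mean_eq s_def[symmetric] by simp
qed

lemma sinh_tanh_mean_asymptotics:
  fixes p :: real
  shows "((\<lambda>x. (sinh_tanh_mean p x - 1) / x ^ 4) \<longlongrightarrow> p * (4 + 5 * p) / 180) (at_right 0)"
  unfolding sinh_tanh_mean_def by real_asymp (simp add: field_simps)

lemma sinh_tanh_mean_lt_1_near_0:
  fixes p :: real
  assumes "-4/5 < p" "p < 0"
  shows "\<exists>x>0. sinh_tanh_mean p x < 1"
proof -
  have "p * (4 + 5 * p) / 180 < 0" using assms by (simp add: mult_neg_pos)
  hence "\<forall>\<^sub>F x in at_right 0. (sinh_tanh_mean p x - 1) / x ^ 4 < 0"
    by (rule order_tendstoD(2)[OF sinh_tanh_mean_asymptotics])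
  moreover have "\<forall>\<^sub>F x in at_right (0::real). x > 0"
    by (rule eventually_at_right_less)
  ultimately have "\<forall>\<^sub>F x in at_right 0. x > 0 \<and> sinh_tanh_mean p x < 1"
    by eventually_elim (simp add: divide_less_0_iff)
  thus ?thesis using eventually_happens'[OF trivial_limit_at_right_real] by blast
qed

theorem proposition4p3:
  fixes p :: real
  assumes "p \<noteq> 0"
  shows "(\<forall>x::real. x > 0 \<longrightarrow>
            2/3 * (sinh x / x) powr p + 1/3 * (tanh x / x) powr p > 1)
         \<longleftrightarrow> (p > 0 \<or> p \<le> -4/5)"
proof -
  have "(\<forall>x>0. sinh_tanh_mean p x > 1) \<longleftrightarrow> (p > 0 \<or> p \<le> -4/5)"
  proof
    assume "\<forall>x>0. sinh_tanh_mean p x > 1"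
    thus "p > 0 \<or> p \<le> -4/5"
      using sinh_tanh_mean_lt_1_near_0[of p] assms by force
  next
    assume "p > 0 \<or> p \<le> -4/5"
    thus "\<forall>x>0. sinh_tanh_mean p x > 1"
      using sinh_tanh_mean_gt_1_of_pos sinh_tanh_mean_gt_1_of_le by blast
  qed
  thus ?thesis by (simp add: sinh_tanh_mean_def)
qed

end
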